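(* In the standing setting, if a robust $\boldsymbol b$-flow exists, then there exists an optimal robust $\boldsymbol b$-flow $\boldsymbol f=(f^1,f^2)$ with $c(\boldsymbol f)=\max\{c(f^1),c(f^2)\}=c(f^2)$.
   Context: A RobMCF instance $(G,u,c,\boldsymbol b)$ consists of a finite directed graph (parallel arcs allowed) $G=(V,A)$ whose arc set is partitioned as $A=A^{\mathrm{fix}}\cup A^{\mathrm{free}}$ into fixed and free arcs, capacities $u:A\to\mathbb Z_{\ge0}$, costs $c:A\to\mathbb Z_{\ge0}$, a finite nonempty set of scenarios $\Lambda$, and balances $b^\lambda:V\to\mathbb Z$ with $\sum_{v}b^\lambda(v)=0$. A $b^\lambda$-flow is a function $f^\lambda:A\to\mathbb Z_{\ge0}$ with $f^\lambda(a)\le u(a)$ for all $a$ and $\sum_{a=(v,w)\in A}f^\lambda(a)-\sum_{a=(w,v)\in A}f^\lambda(a)=b^\lambda(v)$ for all $v\in V$; its cost is $c(f^\lambda)=\sum_a c(a)f^\lambda(a)$. A robust $\boldsymbol b$-flow is a tuple $(f^\lambda)_{\lambda\in\Lambda}$ of $b^\lambda$-flows with $f^\lambda(a)=f^{\lambda'}(a)$ for all $a\in A^{\mathrm{fix}}$, $\lambda,\lambda'\in\Lambda$; its cost is $\max_\lambda c(f^\lambda)$; it is optimal if of minimum cost. Series-parallel (SP) digraphs are defined recursively: a single arc $(o,q)$ is an SP digraph with origin $o$ and target $q$; if $G_1$ (origin $o_1$, target $q_1$) and $G_2$ (origin $o_2$, target $q_2$) are SP digraphs, then their series composition (identify $q_1$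 with $o_2$; origin $o_1$, target $q_2$) and their parallel composition (identify $o_1$ with $o_2$ to form the origin and $q_1$ with $q_2$ to form the target) are SP digraphs. Standing setting: $G$ is an SP digraph with origin $o$ and target $q$, $\Lambda=\{1,2\}$, and there are integers $0\le d^1\le d^2$ with $b^\lambda(o)=d^\lambda$, $b^\lambda(q)=-d^\lambda$ and $b^\lambda(v)=0$ for all other $v$ (unique source $o$, unique sink $q$). *)

theory Defs
  imports Main
begin

text \<open>A digraph is given by a set of arcs A of type 'e together with tail and head maps
  (so parallel arcs are allowed).  Its vertex set is the set of endpoints of arcs.\<close>

definition verts :: "('e \<Rightarrow> 'v) \<Rightarrow> ('e \<Rightarrow> 'v) \<Rightarrow> 'e set \<Rightarrow> 'v set" where
  "verts tailf headf A = tailf ` A \<union> headf ` A"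

inductive sp_digraph :: "('e \<Rightarrow> 'v) \<Rightarrow> ('e \<Rightarrow> 'v) \<Rightarrow> 'e set \<Rightarrow> 'v \<Rightarrow> 'v \<Rightarrow> bool"
  for tailf headf where
  arc: "o' \<noteq> q \<Longrightarrow> tailf e = o' \<Longrightarrow> headf e = q \<Longrightarrow> sp_digraph tailf headf {e} o' q"
| series: "sp_digraph tailf headf A1 o' m \<Longrightarrow> sp_digraph tailf headf A2 m q \<Longrightarrow> A1 \<inter> A2 = {}
    \<Longrightarrow> verts tailf headf A1 \<inter> verts tailf headf A2 = {m} \<Longrightarrow> sp_digraph tailf headf (A1 \<union> A2) o' q"
| parallel: "sp_digraph tailf headf A1 o' q \<Longrightarrow> sp_digraph tailf headf A2 o' q \<Longrightarrow> A1 \<inter> A2 = {}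
    \<Longrightarrow> verts tailf headf A1 \<inter> verts tailf headf A2 = {o', q} \<Longrightarrow> sp_digraph tailf headf (A1 \<union> A2) o' q"

definition st_balance :: "'v \<Rightarrow> 'v \<Rightarrow> nat \<Rightarrow> 'v \<Rightarrow> int" where
  "st_balance o' q d v = (if v = o' then int d else if v = q then - int d else 0)"

definition is_b_flow :: "('e \<Rightarrow> 'v) \<Rightarrow> ('e \<Rightarrow> 'v) \<Rightarrow> 'e set \<Rightarrow> ('e \<Rightarrow> nat) \<Rightarrow> ('v \<Rightarrow> int)
    \<Rightarrow> ('e \<Rightarrow> nat) \<Rightarrow> bool" where
  "is_b_flow tailf headf A u b f \<longleftrightarrow>
     (\<forall>a\<in>A. f a \<le> u a) \<and>
     (\<forall>v\<in>verts tailf headf A.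
        int (\<Sum>a\<in>{a\<in>A. tailf a = v}. f a) - int (\<Sum>a\<in>{a\<in>A. headf a = v}. f a) = b v)"

definition flow_cost :: "'e set \<Rightarrow> ('e \<Rightarrow> nat) \<Rightarrow> ('e \<Rightarrow> nat) \<Rightarrow> nat" where
  "flow_cost A c f = (\<Sum>a\<in>A. c a * f a)"

text \<open>Robust b-flow for the two scenarios \<Lambda> = {1,2}: a pair of flows agreeing on fixed arcs.\<close>
definition is_robust_flow :: "('e \<Rightarrow> 'v) \<Rightarrow> ('e \<Rightarrow> 'v) \<Rightarrow> 'e set \<Rightarrow> 'e set \<Rightarrow> ('e \<Rightarrow> nat)
    \<Rightarrow> ('v \<Rightarrow> int) \<Rightarrow> ('v \<Rightarrow> int) \<Rightarrow> ('e \<Rightarrow> nat) \<Rightarrow> ('e \<Rightarrow> nat) \<Rightarrow> bool" where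
  "is_robust_flow tailf headf A Afix u b1 b2 f1 f2 \<longleftrightarrow>
     is_b_flow tailf headf A u b1 f1 \<and> is_b_flow tailf headf A u b2 f2 \<and> (\<forall>a\<in>Afix. f1 a = f2 a)"

definition robust_cost :: "'e set \<Rightarrow> ('e \<Rightarrow> nat) \<Rightarrow> ('e \<Rightarrow> nat) \<Rightarrow> ('e \<Rightarrow> nat) \<Rightarrow> nat" where
  "robust_cost A c f1 f2 = max (flow_cost A c f1) (flow_cost A c f2)"

definition is_optimal_robust_flow :: "('e \<Rightarrow> 'v) \<Rightarrow> ('e \<Rightarrow> 'v) \<Rightarrow> 'e set \<Rightarrow> 'e set
    \<Rightarrow> ('e \<Rightarrow> nat) \<Rightarrow> ('e \<Rightarrow> nat) \<Rightarrow> ('v \<Rightarrow> int) \<Rightarrow> ('v \<Rightarrow> int)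
    \<Rightarrow> ('e \<Rightarrow> nat) \<Rightarrow> ('e \<Rightarrow> nat) \<Rightarrow> bool" where
  "is_optimal_robust_flow tailf headf A Afix u c b1 b2 f1 f2 \<longleftrightarrow>
     is_robust_flow tailf headf A Afix u b1 b2 f1 f2 \<and>
     (\<forall>g1 g2. is_robust_flow tailf headf A Afix u b1 b2 g1 g2 \<longrightarrow>
        robust_cost A c f1 f2 \<le> robust_cost A c g1 g2)"

end

theory Submission imports Defs begin

text \<open>Let \<open>(f\<^sub>1, f\<^sub>2)\<close> be an optimal robust flow.  The difference \<open>\<delta> = f\<^sub>2 - f\<^sub>1\<close> is a
  signed \<open>o\<close>-\<open>q\<close> flow of value \<open>d\<^sup>2 - d\<^sup>1 \<ge> 0\<close>.  In a series-parallel digraph no \<open>o\<close>-\<open>q\<close>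
  flow needs to traverse an arc backwards, so by induction on the series-parallel structure
  the positive part of \<open>\<delta>\<close> contains an \<open>o\<close>-\<open>q\<close> flow \<open>p\<close> of value \<open>d\<^sup>2 - d\<^sup>1\<close>.  Then
  \<open>g\<^sub>1 = f\<^sub>2 - p\<close> is a \<open>b\<^sup>1\<close>-flow with \<open>min f\<^sub>1 f\<^sub>2 \<le> g\<^sub>1 \<le> f\<^sub>2\<close>; hence \<open>(g\<^sub>1, f\<^sub>2)\<close> is robust,
  its cost is \<open>c(f\<^sub>2)\<close>, and it is no more expensive than \<open>(f\<^sub>1, f\<^sub>2)\<close>.\<close>

context
  fixes tail head :: "'e \<Rightarrow> 'v"
begin

definition net_outflow :: "'e set \<Rightarrow> ('e \<Rightarrow> int) \<Rightarrow> 'v \<Rightarrow> int" where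
  "net_outflow A f v = (\<Sum>a\<in>{a\<in>A. tail a = v}. f a) - (\<Sum>a\<in>{a\<in>A. head a = v}. f a)"

lemma net_outflow_cong: "(\<And>a. a \<in> A \<Longrightarrow> f a = g a) \<Longrightarrow> net_outflow A f v = net_outflow A g v"
  unfolding net_outflow_def by (intro arg_cong2[where f = "(-)"] sum.cong) auto

lemma net_outflow_diff: "net_outflow A (\<lambda>a. f a - g a) v = net_outflow A f v - net_outflow A g v"
  unfolding net_outflow_def by (simp add: sum_subtractf)

lemma net_outflow_Un:
  assumes "A1 \<inter> A2 = {}" "finite A1" "finite A2"
  shows "net_outflow (A1 \<union> A2) f v = net_outflow A1 f v + net_outflow A2 f v"
proof -
  have "{a\<in>A1 \<union> A2. tail a = v} = {a\<in>A1. tail a = v} \<union> {a\<in>A2. tail a = v}"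
    and "{a\<in>A1 \<union> A2. head a = v} = {a\<in>A1. head a = v} \<union> {a\<in>A2. head a = v}" by auto
  with assms show ?thesis
    unfolding net_outflow_def by (simp add: sum.union_disjoint disjoint_iff)
qed

lemma net_outflow_notin_verts:
  assumes "v \<notin> verts tail head A"
  shows "net_outflow A f v = 0"
proof -
  have "{a\<in>A. tail a = v} = {}" "{a\<in>A. head a = v} = {}"
    using assms by (auto simp: verts_def)
  then show ?thesis by (simp only: net_outflow_def sum.empty diff_self)
qed

lemma net_outflow_Un_notin_verts:
  assumes "A1 \<inter> A2 = {}" "finite A1" "finite A2" "v \<notin> verts tail head A2"
  shows "net_outflow (A1 \<union> A2) f v = net_outflow A1 f v"
  using assms by (simp add: net_outflow_Un net_outflow_notin_verts)

lemma sum_net_outflow_verts: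
  assumes "finite A"
  shows "(\<Sum>v\<in>verts tail head A. net_outflow A f v) = 0"
proof -
  have fin: "finite (verts tail head A)" using assms by (simp add: verts_def)
  have "(\<Sum>v\<in>verts tail head A. \<Sum>a\<in>{a\<in>A. tail a = v}. f a) = sum f A"
    and "(\<Sum>v\<in>verts tail head A. \<Sum>a\<in>{a\<in>A. head a = v}. f a) = sum f A"
    by (rule sum.group[OF assms fin]; auto simp: verts_def)+
  then show ?thesis by (simp add: net_outflow_def sum_subtractf)
qed

lemma net_outflow_target:
  assumes "finite A" "s \<in> verts tail head A" "t \<in> verts tail head A" "s \<noteq> t"
    and inner: "\<And>v. v \<in> verts tail head A \<Longrightarrow> v \<noteq> s \<Longrightarrow> v \<noteq> t \<Longrightarrow> net_outflow A f v = 0"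
  shows "net_outflow A f t = - net_outflow A f s"
proof -
  let ?V = "verts tail head A"
  have fin: "finite ?V" using assms(1) by (simp add: verts_def)
  have "0 = (\<Sum>v\<in>?V. net_outflow A f v)" using sum_net_outflow_verts[OF assms(1)] by simp
  also have "\<dots> = net_outflow A f s + net_outflow A f t + (\<Sum>v\<in>?V - {s} - {t}. net_outflow A f v)"
    using fin assms(2-4) by (simp add: sum.remove)
  also have "(\<Sum>v\<in>?V - {s} - {t}. net_outflow A f v) = 0"
    using inner by (intro sum.neutral) auto
  finally show ?thesis by simp
qed

text \<open>Negative values encode flow against the direction of an arc; there are no capacities.\<close>

definition is_st_flow :: "'e set \<Rightarrow> 'v \<Rightarrow> 'v \<Rightarrow> int \<Rightarrow> ('e \<Rightarrow> int) \<Rightarrow> bool" where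
  "is_st_flow A s t k f \<longleftrightarrow>
     (\<forall>v\<in>verts tail head A. net_outflow A f v = (if v = s then k else if v = t then - k else 0))"

lemma is_st_flowI:
  assumes "finite A" "s \<in> verts tail head A" "t \<in> verts tail head A" "s \<noteq> t"
    and "\<And>v. v \<in> verts tail head A \<Longrightarrow> v \<noteq> s \<Longrightarrow> v \<noteq> t \<Longrightarrow> net_outflow A f v = 0"
  shows "is_st_flow A s t (net_outflow A f s) f"
  using net_outflow_target[OF assms] assms(5) unfolding is_st_flow_def by auto

lemma is_st_flow_cong:
  assumes "\<And>a. a \<in> A \<Longrightarrow> f a = g a"
  shows "is_st_flow A s t k f \<longleftrightarrow> is_st_flow A s t k g"
proof -
  have "net_outflow A f = net_outflow A g" using assms by (intro ext net_outflow_cong)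
  then show ?thesis by (simp add: is_st_flow_def)
qed

lemma is_st_flow_diff:
  "is_st_flow A s t k f \<Longrightarrow> is_st_flow A s t l g \<Longrightarrow> is_st_flow A s t (k - l) (\<lambda>a. f a - g a)"
  unfolding is_st_flow_def by (simp add: net_outflow_diff)

lemma is_st_flow_arc:
  assumes "s \<noteq> t" "tail e = s" "head e = t"
  shows "is_st_flow {e} s t k f \<longleftrightarrow> f e = k"
proof -
  have "{a\<in>{e}. tail a = v} = (if s = v then {e} else {})"
    and "{a\<in>{e}. head a = v} = (if t = v then {e} else {})" for v
    using assms by auto
  then show ?thesis
    using assms unfolding is_st_flow_def net_outflow_def verts_def by auto
qed

lemma is_st_flow_series:
  assumes disj: "A1 \<inter> A2 = {}" and common: "verts tail head A1 \<inter> verts tail head A2 = {m}"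
    and fin: "finite A1" "finite A2"
    and st: "s \<in> verts tail head A1" "t \<in> verts tail head A2" "s \<noteq> m" "m \<noteq> t"
  shows "is_st_flow (A1 \<union> A2) s t k f \<longleftrightarrow> is_st_flow A1 s m k f \<and> is_st_flow A2 m t k f"
proof -
  have V: "verts tail head (A1 \<union> A2) = verts tail head A1 \<union> verts tail head A2"
    by (auto simp: verts_def)
  have "{m} \<subseteq> verts tail head A1" "{m} \<subseteq> verts tail head A2"
    unfolding common[symmetric] by blast+
  then have m: "m \<in> verts tail head A1" "m \<in> verts tail head A2" by simp_all
  have in_both: "v = m" if "v \<in> verts tail head A1" "v \<in> verts tail head A2" for v
    using that common by (metis IntI singletonD)
  have only1: "v \<notin> verts tail head A2" if "v \<in> verts tail head A1" "v \<noteq> m" for v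
    using in_both that by blast
  have only2: "v \<notin> verts tail head A1" if "v \<in> verts tail head A2" "v \<noteq> m" for v
    using in_both that by blast
  have t1: "t \<notin> verts tail head A1" and s2: "s \<notin> verts tail head A2"
    using only1[OF st(1,3)] only2[OF st(2)] st(4) by auto
  have net1: "net_outflow (A1 \<union> A2) f v = net_outflow A1 f v"
    if "v \<in> verts tail head A1" "v \<noteq> m" for v
    using net_outflow_Un_notin_verts[OF disj fin only1[OF that]] .
  have net2: "net_outflow (A1 \<union> A2) f v = net_outflow A2 f v"
    if "v \<in> verts tail head A2" "v \<noteq> m" for v
  proof -
    have "A2 \<inter> A1 = {}" using disj by blast
    from net_outflow_Un_notin_verts[OF this fin(2,1) only2[OF that]]
    show ?thesis by (simp only: Un_commute)
  qed
  have netm: "net_outflow (A1 \<union> A2) f m = net_outflow A1 f m + net_outflow A2 f m"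
    using net_outflow_Un[OF disj fin] .
  show ?thesis
  proof
    assume "is_st_flow (A1 \<union> A2) s t k f"
    then have st_at: "v \<in> verts tail head A1 \<or> v \<in> verts tail head A2 \<Longrightarrow>
        net_outflow (A1 \<union> A2) f v = (if v = s then k else if v = t then - k else 0)" for v
      unfolding is_st_flow_def V by blast
    have in1: "net_outflow A1 f v = (if v = s then k else 0)"
      if "v \<in> verts tail head A1" "v \<noteq> m" for v
      using st_at[of v] net1[OF that] that t1 by auto
    have in2: "net_outflow A2 f v = (if v = t then - k else 0)"
      if "v \<in> verts tail head A2" "v \<noteq> m" for v
      using st_at[of v] net2[OF that] that s2 by auto
    have "is_st_flow A1 s m (net_outflow A1 f s) f"
      using fin(1) st(1,3) m(1) in1 by (intro is_st_flowI) auto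
    moreover have "is_st_flow A2 m t (net_outflow A2 f m) f"
      using fin(2) st(2,4) m(2) in2 by (intro is_st_flowI) auto
    moreover have "net_outflow A2 f t = - net_outflow A2 f m"
      using fin(2) st(2,4) m(2) in2 by (intro net_outflow_target) auto
    ultimately show "is_st_flow A1 s m k f \<and> is_st_flow A2 m t k f"
      using in1[OF st(1,3)] in2[OF st(2)] st(4) by auto
  next
    assume "is_st_flow A1 s m k f \<and> is_st_flow A2 m t k f"
    then have in1: "v \<in> verts tail head A1 \<Longrightarrow>
        net_outflow A1 f v = (if v = s then k else if v = m then - k else 0)"
      and in2: "v \<in> verts tail head A2 \<Longrightarrow>
        net_outflow A2 f v = (if v = m then k else if v = t then - k else 0)" for v
      unfolding is_st_flow_def by blast+
    show "is_st_flow (A1 \<union> A2) s t k f"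
      unfolding is_st_flow_def V
    proof
      fix v assume "v \<in> verts tail head A1 \<union> verts tail head A2"
      then consider "v = m" | "v \<in> verts tail head A1" "v \<noteq> m" | "v \<in> verts tail head A2" "v \<noteq> m"
        by blast
      then show "net_outflow (A1 \<union> A2) f v = (if v = s then k else if v = t then - k else 0)"
      proof cases
        case 1
        then show ?thesis using netm in1[OF m(1)] in2[OF m(2)] st(3,4) by simp
      next
        case 2
        then show ?thesis using net1 in1 t1 by auto
      next
        case 3
        then show ?thesis using net2 in2 s2 by auto
      qed
    qed
  qed
qed

lemma is_st_flow_parallel:
  assumes disj: "A1 \<inter> A2 = {}" and common: "verts tail head A1 \<inter> verts tail head A2 = {s, t}"
    and fin: "finite A1" "finite A2" and "s \<noteq> t"
  shows "is_st_flow (A1 \<union> A2) s t k f \<longleftrightarrow>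
    (\<exists>k1 k2. k = k1 + k2 \<and> is_st_flow A1 s t k1 f \<and> is_st_flow A2 s t k2 f)"
proof -
  have V: "verts tail head (A1 \<union> A2) = verts tail head A1 \<union> verts tail head A2"
    by (auto simp: verts_def)
  have "{s, t} \<subseteq> verts tail head A1" "{s, t} \<subseteq> verts tail head A2"
    unfolding common[symmetric] by blast+
  then have st: "s \<in> verts tail head A1" "t \<in> verts tail head A1"
    "s \<in> verts tail head A2" "t \<in> verts tail head A2" by simp_all
  have in_both: "v = s \<or> v = t" if "v \<in> verts tail head A1" "v \<in> verts tail head A2" for v
    using that common by (metis IntI insertE singletonD)
  have only1: "v \<notin> verts tail head A2" if "v \<in> verts tail head A1" "v \<noteq> s" "v \<noteq> t" for v
    using in_both that by blast
  have only2: "v \<notin> verts tail head A1" if "v \<in> verts tail head A2" "v \<noteq> s" "v \<noteq> t" for v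
    using in_both that by blast
  have net: "net_outflow (A1 \<union> A2) f v = net_outflow A1 f v + net_outflow A2 f v" for v
    using net_outflow_Un[OF disj fin] .
  show ?thesis
  proof
    assume "is_st_flow (A1 \<union> A2) s t k f"
    then have st_at: "v \<in> verts tail head A1 \<or> v \<in> verts tail head A2 \<Longrightarrow>
        net_outflow (A1 \<union> A2) f v = (if v = s then k else if v = t then - k else 0)" for v
      unfolding is_st_flow_def V by blast
    have inner1: "net_outflow A1 f v = 0"
      if "v \<in> verts tail head A1" "v \<noteq> s" "v \<noteq> t" for v
      using st_at[of v] net[of v] net_outflow_notin_verts[OF only1[OF that]] that by simp
    have inner2: "net_outflow A2 f v = 0"
      if "v \<in> verts tail head A2" "v \<noteq> s" "v \<noteq> t" for v
      using st_at[of v] net[of v] net_outflow_notin_verts[OF only2[OF that]] that by simp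
    have "is_st_flow A1 s t (net_outflow A1 f s) f"
      using fin(1) assms(5) st inner1 by (intro is_st_flowI)
    moreover have "is_st_flow A2 s t (net_outflow A2 f s) f"
      using fin(2) assms(5) st inner2 by (intro is_st_flowI)
    moreover have "k = net_outflow A1 f s + net_outflow A2 f s"
      using st_at[of s] st(1) net[of s] by simp
    ultimately show "\<exists>k1 k2. k = k1 + k2 \<and> is_st_flow A1 s t k1 f \<and> is_st_flow A2 s t k2 f"
      by blast
  next
    assume "\<exists>k1 k2. k = k1 + k2 \<and> is_st_flow A1 s t k1 f \<and> is_st_flow A2 s t k2 f"
    then obtain k1 k2 where k: "k = k1 + k2"
      and in1: "v \<in> verts tail head A1 \<Longrightarrow>
        net_outflow A1 f v = (if v = s then k1 else if v = t then - k1 else 0)"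
      and in2: "v \<in> verts tail head A2 \<Longrightarrow>
        net_outflow A2 f v = (if v = s then k2 else if v = t then - k2 else 0)" for v
      unfolding is_st_flow_def by blast
    show "is_st_flow (A1 \<union> A2) s t k f"
      unfolding is_st_flow_def V
    proof
      fix v assume "v \<in> verts tail head A1 \<union> verts tail head A2"
      then consider "v = s \<or> v = t" | "v \<in> verts tail head A1" "v \<noteq> s" "v \<noteq> t"
        | "v \<in> verts tail head A2" "v \<noteq> s" "v \<noteq> t"
        by blast
      then show "net_outflow (A1 \<union> A2) f v = (if v = s then k else if v = t then - k else 0)"
      proof cases
        case 1
        then show ?thesis using net[of v] in1 in2 st k by auto
      next
        case 2
        then show ?thesis using net[of v] in1 net_outflow_notin_verts[OF only1] by simp
      next
        case 3
        then show ?thesis using net[of v] in2 net_outflow_notin_verts[OF only2] by simp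
      qed
    qed
  qed
qed

lemma sp_digraphD:
  assumes "sp_digraph tail head A s t"
  shows "finite A" "s \<in> verts tail head A" "t \<in> verts tail head A" "s \<noteq> t"
proof -
  from assms have "finite A \<and> s \<in> verts tail head A \<and> t \<in> verts tail head A \<and> s \<noteq> t"
    by (induction rule: sp_digraph.induct) (auto simp: verts_def)
  then show "finite A" "s \<in> verts tail head A" "t \<in> verts tail head A" "s \<noteq> t" by simp_all
qed

lemma sp_digraph_subflow:
  assumes "sp_digraph tail head A s t" "is_st_flow A s t k \<delta>" "0 \<le> j" "j \<le> max k 0"
  shows "\<exists>p. (\<forall>a\<in>A. 0 \<le> p a \<and> p a \<le> max (\<delta> a) 0) \<and> is_st_flow A s t j p"
  using assms
proof (induction arbitrary: k j rule: sp_digraph.induct)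
  case (arc s t e)
  then have "\<delta> e = k" by (simp add: is_st_flow_arc)
  with arc show ?case by (intro exI[of _ "\<lambda>_. j"]) (auto simp: is_st_flow_arc)
next
  case (series A1 s m A2 t)
  note D1 = sp_digraphD[OF series.hyps(1)] and D2 = sp_digraphD[OF series.hyps(2)]
  note split = is_st_flow_series[OF series.hyps(3,4) D1(1) D2(1) D1(2) D2(3) D1(4) D2(4)]
  have \<delta>1: "is_st_flow A1 s m k \<delta>" and \<delta>2: "is_st_flow A2 m t k \<delta>"
    using series.prems(1) unfolding split by simp_all
  obtain p1 where p1: "\<forall>a\<in>A1. 0 \<le> p1 a \<and> p1 a \<le> max (\<delta> a) 0" "is_st_flow A1 s m j p1"
    using series.IH(1)[OF \<delta>1 series.prems(2,3)] by blast
  obtain p2 where p2: "\<forall>a\<in>A2. 0 \<le> p2 a \<and> p2 a \<le> max (\<delta> a) 0" "is_st_flow A2 m t j p2"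
    using series.IH(2)[OF \<delta>2 series.prems(2,3)] by blast
  define p where "p a = (if a \<in> A1 then p1 a else p2 a)" for a
  have "is_st_flow A1 s m j p"
    using p1(2) by (subst is_st_flow_cong[of A1 p p1]) (simp_all add: p_def)
  moreover have "is_st_flow A2 m t j p"
    using p2(2) series.hyps(3) by (subst is_st_flow_cong[of A2 p p2]) (auto simp: p_def)
  ultimately have "is_st_flow (A1 \<union> A2) s t j p" unfolding split by simp
  moreover have "\<forall>a\<in>A1 \<union> A2. 0 \<le> p a \<and> p a \<le> max (\<delta> a) 0"
    using p1(1) p2(1) by (auto simp: p_def)
  ultimately show ?case by blast
next
  case (parallel A1 s t A2)
  note D1 = sp_digraphD[OF parallel.hyps(1)]
  note split = is_st_flow_parallel[OF parallel.hyps(3,4) D1(1) sp_digraphD(1)[OF parallel.hyps(2)] D1(4)]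
  obtain k1 k2 where k: "k = k1 + k2" "is_st_flow A1 s t k1 \<delta>" "is_st_flow A2 s t k2 \<delta>"
    using parallel.prems(1) unfolding split by blast
  define j1 where "j1 = min j (max k1 0)"
  have j: "0 \<le> j1" "j1 \<le> max k1 0" "0 \<le> j - j1" "j - j1 \<le> max k2 0"
    using parallel.prems(2,3) k(1) by (auto simp: j1_def)
  obtain p1 where p1: "\<forall>a\<in>A1. 0 \<le> p1 a \<and> p1 a \<le> max (\<delta> a) 0" "is_st_flow A1 s t j1 p1"
    using parallel.IH(1)[OF k(2) j(1,2)] by blast
  obtain p2 where p2: "\<forall>a\<in>A2. 0 \<le> p2 a \<and> p2 a \<le> max (\<delta> a) 0" "is_st_flow A2 s t (j - j1) p2"
    using parallel.IH(2)[OF k(3) j(3,4)] by blast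
  define p where "p a = (if a \<in> A1 then p1 a else p2 a)" for a
  have "is_st_flow A1 s t j1 p"
    using p1(2) by (subst is_st_flow_cong[of A1 p p1]) (simp_all add: p_def)
  moreover have "is_st_flow A2 s t (j - j1) p"
    using p2(2) parallel.hyps(3) by (subst is_st_flow_cong[of A2 p p2]) (auto simp: p_def)
  ultimately have "is_st_flow (A1 \<union> A2) s t j p"
    unfolding split by (intro exI[of _ j1] exI[of _ "j - j1"]) simp
  moreover have "\<forall>a\<in>A1 \<union> A2. 0 \<le> p a \<and> p a \<le> max (\<delta> a) 0"
    using p1(1) p2(1) by (auto simp: p_def)
  ultimately show ?case by blast
qed

lemma is_b_flow_st_balance_iff:
  "is_b_flow tail head A u (st_balance s t d) f \<longleftrightarrow>
    (\<forall>a\<in>A. f a \<le> u a) \<and> is_st_flow A s t (int d) (\<lambda>a. int (f a))"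
  unfolding is_b_flow_def is_st_flow_def net_outflow_def st_balance_def by (simp add: of_nat_sum)

lemma sp_b_flow_between:
  assumes sp: "sp_digraph tail head A s t" and "d1 \<le> d2"
    and f1: "is_b_flow tail head A u (st_balance s t d1) f1"
    and f2: "is_b_flow tail head A u (st_balance s t d2) f2"
  obtains g where "is_b_flow tail head A u (st_balance s t d1) g"
    and "\<forall>a\<in>A. min (f1 a) (f2 a) \<le> g a \<and> g a \<le> f2 a"
proof -
  have f1_flow: "is_st_flow A s t (int d1) (\<lambda>a. int (f1 a))"
    using f1 by (simp add: is_b_flow_st_balance_iff)
  have f2_flow: "is_st_flow A s t (int d2) (\<lambda>a. int (f2 a))"
    and f2_cap: "\<forall>a\<in>A. f2 a \<le> u a"
    using f2 by (simp_all add: is_b_flow_st_balance_iff)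
  have "is_st_flow A s t (int d2 - int d1) (\<lambda>a. int (f2 a) - int (f1 a))"
    using is_st_flow_diff[OF f2_flow f1_flow] .
  moreover have "int d2 - int d1 \<le> max (int d2 - int d1) 0" "0 \<le> int d2 - int d1"
    using \<open>d1 \<le> d2\<close> by simp_all
  ultimately obtain p where p: "\<forall>a\<in>A. 0 \<le> p a \<and> p a \<le> max (int (f2 a) - int (f1 a)) 0"
    and p_flow: "is_st_flow A s t (int d2 - int d1) p"
    using sp_digraph_subflow[OF sp] by blast
  define g where "g a = nat (int (f2 a) - p a)" for a
  have g_int: "int (g a) = int (f2 a) - p a" if "a \<in> A" for a
    using p that unfolding g_def by fastforce
  have g_between: "min (f1 a) (f2 a) \<le> g a \<and> g a \<le> f2 a" if "a \<in> A" for a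
    using p that g_int[OF that] by fastforce
  have "is_st_flow A s t (int d2 - (int d2 - int d1)) (\<lambda>a. int (f2 a) - p a)"
    using is_st_flow_diff[OF f2_flow p_flow] .
  then have "is_st_flow A s t (int d1) (\<lambda>a. int (g a))"
    using is_st_flow_cong[of A "\<lambda>a. int (g a)" "\<lambda>a. int (f2 a) - p a"] g_int by simp
  moreover have "\<forall>a\<in>A. g a \<le> u a"
    using f2_cap g_between order_trans by blast
  ultimately show thesis
    using g_between by (intro that) (auto simp: is_b_flow_st_balance_iff)
qed

end

lemma ex_optimal_robust_flow:
  assumes "is_robust_flow tailf headf A Afix u b1 b2 g1 g2"
  obtains f1 f2 where "is_optimal_robust_flow tailf headf A Afix u c b1 b2 f1 f2"
proof -
  let ?R = "\<lambda>g. is_robust_flow tailf headf A Afix u b1 b2 (fst g) (snd g)"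
  obtain f where "?R f" and "\<forall>g. ?R g \<longrightarrow>
      robust_cost A c (fst f) (snd f) \<le> robust_cost A c (fst g) (snd g)"
    using ex_has_least_nat[of ?R "(g1, g2)" "\<lambda>g. robust_cost A c (fst g) (snd g)"] assms by auto
  then show thesis
    by (intro that[of "fst f" "snd f"]) (auto simp: is_optimal_robust_flow_def)
qed

theorem mainTheorem17:
  fixes tailf headf :: "'e \<Rightarrow> 'v" and A Afix :: "'e set" and u c :: "'e \<Rightarrow> nat"
    and o' q :: 'v and d1 d2 :: nat
  assumes sp: "sp_digraph tailf headf A o' q"
    and fixA: "Afix \<subseteq> A"
    and d: "d1 \<le> d2"
    and ex: "\<exists>g1 g2. is_robust_flow tailf headf A Afix u (st_balance o' q d1) (st_balance o' q d2) g1 g2"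
  shows "\<exists>f1 f2. is_optimal_robust_flow tailf headf A Afix u c (st_balance o' q d1) (st_balance o' q d2) f1 f2
           \<and> robust_cost A c f1 f2 = flow_cost A c f2"
proof -
  let ?b1 = "st_balance o' q d1" and ?b2 = "st_balance o' q d2"
  obtain f1 f2 where opt: "is_optimal_robust_flow tailf headf A Afix u c ?b1 ?b2 f1 f2"
    using ex ex_optimal_robust_flow by meson
  then have f: "is_b_flow tailf headf A u ?b1 f1" "is_b_flow tailf headf A u ?b2 f2"
    "\<forall>a\<in>Afix. f1 a = f2 a"
    by (simp_all add: is_optimal_robust_flow_def is_robust_flow_def)
  obtain g1 where g1: "is_b_flow tailf headf A u ?b1 g1"
    and between: "\<forall>a\<in>A. min (f1 a) (f2 a) \<le> g1 a \<and> g1 a \<le> f2 a"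
    using sp_b_flow_between[OF sp d f(1,2)] .
  have robust: "is_robust_flow tailf headf A Afix u ?b1 ?b2 g1 f2"
    using g1 f(2,3) between fixA by (fastforce simp: is_robust_flow_def intro: antisym)
  have "flow_cost A c g1 \<le> flow_cost A c f2"
    using between unfolding flow_cost_def by (intro sum_mono mult_left_mono) auto
  then have cost: "robust_cost A c g1 f2 = flow_cost A c f2"
    by (simp add: robust_cost_def)
  then have "robust_cost A c g1 f2 \<le> robust_cost A c f1 f2"
    by (simp add: robust_cost_def)
  with opt robust have "is_optimal_robust_flow tailf headf A Afix u c ?b1 ?b2 g1 f2"
    unfolding is_optimal_robust_flow_def by (meson order_trans)
  with cost show ?thesis by blast
qed

end
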